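(* Let the cell types be indexed $\{0,1,\dots,n\}$ with $0$ the non-resistant type, and let $\boldsymbol{\alpha}_{(0)}=(\alpha_{(0,0)},\alpha_{(0,1)},\dots,\alpha_{(0,n)})$ be a probability vector. Define a random process $\boldsymbol{\pi}(t)\in\mathbb{Z}_+^{n+1}$, $t\in\mathbb{Z}_+$, by $\boldsymbol{\pi}(0)=\mathbf{e}_0$ (a single non-resistant cell) and $$\boldsymbol{\pi}(t+1)\sim \mathrm{MD}\big(\pi_0(t),\boldsymbol{\alpha}_{(0)}\big)+2\boldsymbol{\pi}(t)-\mathbf{e}_0\circ\boldsymbol{\pi}(t),$$ where $\mathrm{MD}(m,\mathbf{p})$ denotes a multinomial random vector with $m$ trials and outcome probabilities $\mathbf{p}$ (drawn conditionally on $\boldsymbol{\pi}(t)$), $\mathbf{e}_0$ is the first unit vector and $\circ$ is the componentwise product. Then for every $t\in\mathbb{Z}_+$, $\mathbb{E}(\pi_0(t))=(\alpha_{(0,0)}+1)^t$, and for every resistant type $q\ne0$, $\mathbb{E}(\pi_q(t+1))=\sum_{k=0}^{t}2^k\alpha_{(0,q)}(\alpha_{(0,0)}+1)^{t-k}$.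
   Context: This is a branching model of tumor growth: $\pi_q(t)$ is the number of cells of type $q$ at generation $t$; non-resistant cells may give rise to a mutated (single-drug resistant) daughter cell of type $q$ with probability $\alpha_{(0,q)}$, while resistant cells simply double each generation. *)

theory Defs
  imports "HOL-Probability.Probability"
begin

text \<open>States are vectors in Z_+^{n+1}, represented as functions nat => nat (components
  beyond n stay 0). The probability vector alpha_(0) is a pmf on cell types {0..n}.\<close>

primrec multinomial_pmf :: "nat pmf \<Rightarrow> nat \<Rightarrow> (nat \<Rightarrow> nat) pmf" where
  "multinomial_pmf \<alpha> 0 = return_pmf (\<lambda>_. 0)"
| "multinomial_pmf \<alpha> (Suc m) =
     bind_pmf (multinomial_pmf \<alpha> m) (\<lambda>v. map_pmf (\<lambda>i. v(i := v i + 1)) \<alpha>)"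

definition unit0 :: "nat \<Rightarrow> nat" where
  "unit0 = (\<lambda>i. if i = 0 then 1 else 0)"

primrec tumor_process :: "nat pmf \<Rightarrow> nat \<Rightarrow> (nat \<Rightarrow> nat) pmf" where
  "tumor_process \<alpha> 0 = return_pmf unit0"
| "tumor_process \<alpha> (Suc t) =
     bind_pmf (tumor_process \<alpha> t)
       (\<lambda>\<pi>. map_pmf (\<lambda>x i. x i + 2 * \<pi> i - unit0 i * \<pi> i) (multinomial_pmf \<alpha> (\<pi> 0)))"

end

theory Submission
  imports Defs
begin

text \<open>A multinomial count with \<open>m\<close> trials has mean \<open>m \<alpha>\<^sub>j\<close>, so the mean counts obey the linear
  recursion \<open>E \<pi>\<^sub>j(t+1) = \<alpha>\<^sub>j E \<pi>\<^sub>0(t) + c\<^sub>j E \<pi>\<^sub>j(t)\<close> with \<open>c\<^sub>0 = 1\<close> and \<open>c\<^sub>j = 2\<close> for \<open>j \<noteq> 0\<close>.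
  Type 0 therefore grows geometrically with rate \<open>\<alpha>\<^sub>0 + 1\<close>, and a resistant type is fed by it
  while doubling, which unrolls to the stated convolution sum. The means are computed as
  nonnegative integrals, where linearity holds without integrability side conditions.\<close>

declare tumor_process.simps(2) [simp del]

lemma nn_integral_multinomial_count:
  "(\<integral>\<^sup>+v. of_nat (v j) \<partial>multinomial_pmf \<alpha> m) = of_nat m * ennreal (pmf \<alpha> j)"
proof (induction m)
  case 0
  then show ?case by simp
next
  case (Suc m)
  have draw: "(\<integral>\<^sup>+i. of_nat ((v(i := v i + 1)) j) \<partial>\<alpha>) = of_nat (v j) + ennreal (pmf \<alpha> j)"
    for v :: "nat \<Rightarrow> nat"
  proof -
    have "(\<integral>\<^sup>+i. of_nat ((v(i := v i + 1)) j) \<partial>\<alpha>) = (\<integral>\<^sup>+i. of_nat (v j) + indicator {j} i \<partial>\<alpha>)"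
      by (intro nn_integral_cong) (auto simp: indicator_def)
    also have "\<dots> = of_nat (v j) + ennreal (pmf \<alpha> j)"
      by (simp add: nn_integral_add measure_pmf.emeasure_space_1 emeasure_pmf_single)
    finally show ?thesis .
  qed
  have "(\<integral>\<^sup>+v. of_nat (v j) \<partial>multinomial_pmf \<alpha> (Suc m))
      = (\<integral>\<^sup>+v. of_nat (v j) + ennreal (pmf \<alpha> j) \<partial>multinomial_pmf \<alpha> m)"
    by (simp only: multinomial_pmf.simps nn_integral_bind_pmf nn_integral_map_pmf draw)
  also have "\<dots> = of_nat m * ennreal (pmf \<alpha> j) + ennreal (pmf \<alpha> j)"
    by (simp add: nn_integral_add measure_pmf.emeasure_space_1 Suc)
  finally show ?case by (simp add: algebra_simps)
qed

lemma nn_integral_tumor_process_Suc: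
  "(\<integral>\<^sup>+\<pi>. of_nat (\<pi> j) \<partial>tumor_process \<alpha> (Suc t))
   = ennreal (pmf \<alpha> j) * (\<integral>\<^sup>+\<pi>. of_nat (\<pi> 0) \<partial>tumor_process \<alpha> t)
     + (if j = 0 then 1 else 2) * (\<integral>\<^sup>+\<pi>. of_nat (\<pi> j) \<partial>tumor_process \<alpha> t)"
proof -
  have step: "(\<integral>\<^sup>+x. of_nat (x j + 2 * \<pi> j - unit0 j * \<pi> j) \<partial>multinomial_pmf \<alpha> (\<pi> 0))
      = ennreal (pmf \<alpha> j) * of_nat (\<pi> 0) + (if j = 0 then 1 else 2) * of_nat (\<pi> j)"
    for \<pi> :: "nat \<Rightarrow> nat"
  proof -
    have "(\<integral>\<^sup>+x. of_nat (x j + 2 * \<pi> j - unit0 j * \<pi> j) \<partial>multinomial_pmf \<alpha> (\<pi> 0))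
        = (\<integral>\<^sup>+x. of_nat (x j) + (if j = 0 then 1 else 2) * of_nat (\<pi> j) \<partial>multinomial_pmf \<alpha> (\<pi> 0))"
      by (intro nn_integral_cong) (simp add: unit0_def)
    also have "\<dots> = ennreal (pmf \<alpha> j) * of_nat (\<pi> 0) + (if j = 0 then 1 else 2) * of_nat (\<pi> j)"
      by (simp add: nn_integral_add nn_integral_multinomial_count measure_pmf.emeasure_space_1
          mult.commute)
    finally show ?thesis .
  qed
  show ?thesis
    by (simp only: tumor_process.simps nn_integral_bind_pmf nn_integral_map_pmf step)
       (simp add: nn_integral_add nn_integral_cmult)
qed

lemma nn_integral_tumor_process_nonresistant:
  "(\<integral>\<^sup>+\<pi>. of_nat (\<pi> 0) \<partial>tumor_process \<alpha> t) = (ennreal (pmf \<alpha> 0) + 1) ^ t"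
  by (induction t) (simp_all add: nn_integral_tumor_process_Suc unit0_def algebra_simps)

lemma sum_doubling_convolution_Suc:
  fixes a b :: "'a::comm_semiring_1"
  shows "(\<Sum>k = 0..Suc t. 2 ^ k * a * b ^ (Suc t - k))
    = a * b ^ Suc t + 2 * (\<Sum>k = 0..t. 2 ^ k * a * b ^ (t - k))"
  by (subst sum.atLeast0_atMost_Suc_shift) (simp add: sum_distrib_left algebra_simps)

lemma nn_integral_tumor_process_resistant:
  assumes "q \<noteq> 0"
  shows "(\<integral>\<^sup>+\<pi>. of_nat (\<pi> q) \<partial>tumor_process \<alpha> (Suc t))
    = (\<Sum>k = 0..t. 2 ^ k * ennreal (pmf \<alpha> q) * (ennreal (pmf \<alpha> 0) + 1) ^ (t - k))"
proof (induction t)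
  case 0
  show ?case
    using assms by (simp add: nn_integral_tumor_process_Suc unit0_def)
next
  case (Suc t)
  have "(\<integral>\<^sup>+\<pi>. of_nat (\<pi> q) \<partial>tumor_process \<alpha> (Suc (Suc t)))
      = ennreal (pmf \<alpha> q) * (ennreal (pmf \<alpha> 0) + 1) ^ Suc t
        + 2 * (\<Sum>k = 0..t. 2 ^ k * ennreal (pmf \<alpha> q) * (ennreal (pmf \<alpha> 0) + 1) ^ (t - k))"
    using assms
    by (simp only: nn_integral_tumor_process_Suc [where j = q and t = "Suc t"]
        nn_integral_tumor_process_nonresistant Suc if_False)
  also have "\<dots>
      = (\<Sum>k = 0..Suc t. 2 ^ k * ennreal (pmf \<alpha> q) * (ennreal (pmf \<alpha> 0) + 1) ^ (Suc t - k))"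
    by (rule sum_doubling_convolution_Suc [symmetric])
  finally show ?case .
qed

lemma expectation_count_eq_enn2real:
  "measure_pmf.expectation M (\<lambda>\<pi>. real (\<pi> j)) = enn2real (\<integral>\<^sup>+\<pi>. of_nat (\<pi> j) \<partial>M)"
  by (simp add: integral_eq_nn_integral ennreal_of_nat_eq_real_of_nat)

theorem proposition1:
  fixes \<alpha> :: "nat pmf" and n :: nat
  assumes "set_pmf \<alpha> \<subseteq> {0..n}"
  shows "\<forall>t::nat.
     measure_pmf.expectation (tumor_process \<alpha> t) (\<lambda>\<pi>. real (\<pi> 0)) = (pmf \<alpha> 0 + 1) ^ t
     \<and> (\<forall>q. 1 \<le> q \<and> q \<le> n \<longrightarrow>
          measure_pmf.expectation (tumor_process \<alpha> (Suc t)) (\<lambda>\<pi>. real (\<pi> q))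
          = (\<Sum>k = 0..t. 2 ^ k * pmf \<alpha> q * (pmf \<alpha> 0 + 1) ^ (t - k)))"
proof (intro allI conjI impI)
  fix t q :: nat
  have "(\<integral>\<^sup>+\<pi>. of_nat (\<pi> 0) \<partial>tumor_process \<alpha> t) = ennreal ((pmf \<alpha> 0 + 1) ^ t)"
    unfolding nn_integral_tumor_process_nonresistant by (simp flip: ennreal_power)
  then show "measure_pmf.expectation (tumor_process \<alpha> t) (\<lambda>\<pi>. real (\<pi> 0)) = (pmf \<alpha> 0 + 1) ^ t"
    by (simp add: expectation_count_eq_enn2real)
  assume "1 \<le> q \<and> q \<le> n"
  then have "q \<noteq> 0" by simp
  have "(\<integral>\<^sup>+\<pi>. of_nat (\<pi> q) \<partial>tumor_process \<alpha> (Suc t))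
      = (\<Sum>k = 0..t. ennreal (2 ^ k * pmf \<alpha> q * (pmf \<alpha> 0 + 1) ^ (t - k)))"
    unfolding nn_integral_tumor_process_resistant [OF \<open>q \<noteq> 0\<close>]
    by (simp add: ennreal_mult flip: ennreal_power)
  then show "measure_pmf.expectation (tumor_process \<alpha> (Suc t)) (\<lambda>\<pi>. real (\<pi> q))
      = (\<Sum>k = 0..t. 2 ^ k * pmf \<alpha> q * (pmf \<alpha> 0 + 1) ^ (t - k))"
    by (simp add: expectation_count_eq_enn2real sum_nonneg)
qed

end
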